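(* Let $L>0$, let $a$ satisfy (H_a), $g\in L^2(0,L)$, and let $\phi$ satisfy (H_φ) with $\phi(0)=+\infty$. Assume there is $M>0$ with $g(x)\ge -M$ for a.e. $x\in(0,L)$. Then problem (P) has no weak solution.
   Context: (H_a): $a\in L^\infty(0,L)$ and there are constants $0<\alpha<\beta$ with $\alpha\le a(x)\le\beta$ for a.e. $x\in(0,L)$. (H_φ): $\phi:\mathbb{R}\to\mathbb{R}\cup\{+\infty\}$ is continuous when $\mathbb{R}\cup\{+\infty\}$ carries its usual topology (neighbourhoods of $+\infty$ contain some $(M,+\infty]$), and $\phi(s)<+\infty$ for every $s\neq 0$. A weak solution of problem (P) with data $(a,g,\phi)$ is a function $u$ with $u\in H^1_0(0,L)$, $\phi(u)\in L^2(0,L)$, and $-\frac{d}{dx}(a\frac{du}{dx})=-\frac{d\phi(u)}{dx}-\frac{dg}{dx}$ in $\mathcal D'(0,L)$. *)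

theory Defs
  imports "HOL-Analysis.Analysis"
begin

definition L2_on :: "real \<Rightarrow> (real \<Rightarrow> real) \<Rightarrow> bool" where
  "L2_on L f \<longleftrightarrow> set_borel_measurable lborel {0<..<L} f
     \<and> set_integrable lborel {0<..<L} (\<lambda>x. (f x)^2)"

definition test_fun :: "real \<Rightarrow> (real \<Rightarrow> real) \<Rightarrow> bool" where
  "test_fun L \<psi> \<longleftrightarrow> (\<forall>n x. (deriv ^^ n) \<psi> differentiable (at x))
     \<and> (\<exists>\<delta>>0. \<forall>x. \<psi> x \<noteq> 0 \<longrightarrow> x \<in> {\<delta>..L-\<delta>})"

definition weak_deriv_on :: "real \<Rightarrow> (real \<Rightarrow> real) \<Rightarrow> (real \<Rightarrow> real) \<Rightarrow> bool" where
  "weak_deriv_on L u v \<longleftrightarrow> (\<forall>\<psi>. test_fun L \<psi> \<longrightarrow>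
     (LINT x:{0<..<L}|lborel. u x * deriv \<psi> x) = - (LINT x:{0<..<L}|lborel. v x * \<psi> x))"

definition H1_on :: "real \<Rightarrow> (real \<Rightarrow> real) \<Rightarrow> bool" where
  "H1_on L u \<longleftrightarrow> L2_on L u \<and> (\<exists>v. L2_on L v \<and> weak_deriv_on L u v)"

text \<open>H^1_0(0,L): H^1 functions with zero trace, i.e. whose continuous representative
  on [0,L] vanishes at both endpoints.\<close>
definition H1_0_on :: "real \<Rightarrow> (real \<Rightarrow> real) \<Rightarrow> bool" where
  "H1_0_on L u \<longleftrightarrow> H1_on L u \<and>
     (\<exists>w. continuous_on {0..L} w \<and> w 0 = 0 \<and> w L = 0 \<and>
          (AE x in lborel. x \<in> {0<..<L} \<longrightarrow> u x = w x))"

definition phi_comp_L2 :: "real \<Rightarrow> (real \<Rightarrow> ereal) \<Rightarrow> (real \<Rightarrow> real) \<Rightarrow> bool" where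
  "phi_comp_L2 L \<phi> u \<longleftrightarrow> (AE x in lborel. x \<in> {0<..<L} \<longrightarrow> \<phi> (u x) \<noteq> \<infinity>)
     \<and> L2_on L (\<lambda>x. real_of_ereal (\<phi> (u x)))"

text \<open>Weak solution of (P): u in H^1_0, phi(u) in L^2 and
  -(a u')' = -(phi(u))' - g' in D'(0,L), i.e. for every test function psi,
  int a u' psi' = int phi(u) psi' + int g psi'.\<close>
definition weak_solution ::
  "real \<Rightarrow> (real \<Rightarrow> real) \<Rightarrow> (real \<Rightarrow> real) \<Rightarrow> (real \<Rightarrow> ereal) \<Rightarrow> (real \<Rightarrow> real) \<Rightarrow> bool" where
  "weak_solution L a g \<phi> u \<longleftrightarrow> H1_0_on L u \<and> phi_comp_L2 L \<phi> u \<and>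
     (\<exists>v. L2_on L v \<and> weak_deriv_on L u v \<and>
       (\<forall>\<psi>. test_fun L \<psi> \<longrightarrow>
          (LINT x:{0<..<L}|lborel. a x * v x * deriv \<psi> x) =
          (LINT x:{0<..<L}|lborel. real_of_ereal (\<phi> (u x)) * deriv \<psi> x)
          + (LINT x:{0<..<L}|lborel. g x * deriv \<psi> x)))"

definition H_a :: "real \<Rightarrow> (real \<Rightarrow> real) \<Rightarrow> bool" where
  "H_a L a \<longleftrightarrow> set_borel_measurable lborel {0<..<L} a \<and>
     (\<exists>\<alpha> \<beta>. 0 < \<alpha> \<and> \<alpha> < \<beta> \<and>
        (AE x in lborel. x \<in> {0<..<L} \<longrightarrow> \<alpha> \<le> a x \<and> a x \<le> \<beta>))"

definition H_phi :: "(real \<Rightarrow> ereal) \<Rightarrow> bool" where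
  "H_phi \<phi> \<longleftrightarrow> (\<forall>s. \<phi> s \<noteq> -\<infinity>) \<and> continuous_on UNIV \<phi> \<and> (\<forall>s. s \<noteq> 0 \<longrightarrow> \<phi> s < \<infinity>)"

end

theory Submission
  imports Defs
begin

text \<open>Suppose \<open>u\<close> were a weak solution and let \<open>v\<close> be its weak derivative. By the
  du Bois-Reymond lemma the weak equation says \<open>a v = \<phi>(u) + g + c\<close> a.e. for a constant \<open>c\<close>.
  Since \<open>\<phi>(s) \<rightarrow> +\<infinity>\<close> as \<open>s \<rightarrow> 0\<close>, \<open>g \<ge> -M\<close> and \<open>a > 0\<close>, this forces \<open>v \<ge> 0\<close>
  wherever \<open>|u|\<close> is small. The continuous representative \<open>w\<close> of \<open>u\<close> satisfies
  \<open>w(y) - w(x) = \<integral>\<^sub>x\<^sup>y v\<close>, so it is nondecreasing on every interval on which it stays close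
  to 0. Vanishing at both endpoints, \<open>w\<close> can then neither rise above nor fall below 0,
  so \<open>u = 0\<close> a.e., contradicting \<open>\<phi>(u) < +\<infinity>\<close> a.e. and \<open>\<phi>(0) = +\<infinity>\<close>.\<close>

section \<open>Smooth functions\<close>

fun times_differentiable :: "nat \<Rightarrow> (real \<Rightarrow> real) \<Rightarrow> bool" where
  "times_differentiable 0 f \<longleftrightarrow> True"
| "times_differentiable (Suc n) f \<longleftrightarrow> (\<forall>x. f differentiable (at x)) \<and> times_differentiable n (deriv f)"

definition smooth :: "(real \<Rightarrow> real) \<Rightarrow> bool" where
  "smooth f \<longleftrightarrow> (\<forall>n. times_differentiable n f)"

lemma times_differentiable_iff:
  "times_differentiable n f \<longleftrightarrow> (\<forall>m<n. \<forall>x. (deriv ^^ m) f differentiable (at x))"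
proof (induction n arbitrary: f)
  case (Suc n)
  have "(\<forall>m<Suc n. \<forall>x. (deriv ^^ m) f differentiable (at x)) \<longleftrightarrow>
        (\<forall>x. f differentiable (at x)) \<and> (\<forall>m<n. \<forall>x. (deriv ^^ m) (deriv f) differentiable (at x))"
    by (auto simp: less_Suc_eq_0_disj funpow_Suc_right simp del: funpow.simps)
  then show ?case using Suc.IH by simp
qed simp

lemma test_fun_iff:
  "test_fun L \<psi> \<longleftrightarrow> smooth \<psi> \<and> (\<exists>\<delta>>0. \<forall>x. \<psi> x \<noteq> 0 \<longrightarrow> x \<in> {\<delta>..L-\<delta>})"
  unfolding test_fun_def smooth_def times_differentiable_iff by blast

lemma times_differentiable_Suc_DERIV:
  "times_differentiable (Suc n) f \<Longrightarrow> (f has_real_derivative deriv f x) (at x)"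
  using DERIV_deriv_iff_real_differentiable by auto

lemma times_differentiable_Suc_imp:
  "times_differentiable (Suc n) f \<Longrightarrow> times_differentiable n f"
  by (induction n arbitrary: f) auto

lemma deriv_eqI: "(\<And>x. (f has_real_derivative f' x) (at x)) \<Longrightarrow> deriv f = f'"
  by (rule ext) (rule DERIV_imp_deriv)

lemma times_differentiable_add:
  "times_differentiable n f \<Longrightarrow> times_differentiable n g \<Longrightarrow> times_differentiable n (\<lambda>x. f x + g x)"
proof (induction n arbitrary: f g)
  case (Suc n)
  have "deriv (\<lambda>x. f x + g x) = (\<lambda>x. deriv f x + deriv g x)"
    using Suc.prems by (intro deriv_eqI DERIV_add times_differentiable_Suc_DERIV)
  then show ?case using Suc by auto
qed simp

lemma times_differentiable_cmult:
  "times_differentiable n f \<Longrightarrow> times_differentiable n (\<lambda>x. c * f x)"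
proof (induction n arbitrary: f)
  case (Suc n)
  have "deriv (\<lambda>x. c * f x) = (\<lambda>x. c * deriv f x)"
    using Suc.prems by (intro deriv_eqI DERIV_cmult times_differentiable_Suc_DERIV)
  then show ?case using Suc by auto
qed simp

lemma times_differentiable_mult:
  "times_differentiable n f \<Longrightarrow> times_differentiable n g \<Longrightarrow> times_differentiable n (\<lambda>x. f x * g x)"
proof (induction n arbitrary: f g)
  case (Suc n)
  have "deriv (\<lambda>x. f x * g x) = (\<lambda>x. deriv f x * g x + f x * deriv g x)"
    by (rule deriv_eqI, rule DERIV_cong[OF DERIV_mult])
       (use Suc.prems times_differentiable_Suc_DERIV in \<open>auto simp: algebra_simps\<close>)
  moreover have "times_differentiable n f" "times_differentiable n g"
    using Suc.prems times_differentiable_Suc_imp by blast+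
  then have "times_differentiable n (\<lambda>x. deriv f x * g x + f x * deriv g x)"
    using Suc by (intro times_differentiable_add Suc.IH) auto
  ultimately show ?case using Suc.prems by auto
qed simp

lemma times_differentiable_inverse:
  "times_differentiable n f \<Longrightarrow> (\<And>x. f x \<noteq> 0) \<Longrightarrow> times_differentiable n (\<lambda>x. inverse (f x))"
proof (induction n arbitrary: f)
  case (Suc n)
  have D: "((\<lambda>x. inverse (f x)) has_real_derivative
      (-1) * (deriv f x * (inverse (f x) * inverse (f x)))) (at x)" for x
    by (rule DERIV_cong[OF DERIV_inverse_fun[OF times_differentiable_Suc_DERIV[OF Suc.prems(1)]
        Suc.prems(2)]])
       (simp add: power2_eq_square)
  then have "deriv (\<lambda>x. inverse (f x)) = (\<lambda>x. (-1) * (deriv f x * (inverse (f x) * inverse (f x))))"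
    by (rule deriv_eqI)
  moreover have "times_differentiable n (\<lambda>x. inverse (f x))"
    using Suc times_differentiable_Suc_imp by blast
  then have "times_differentiable n (\<lambda>x. (-1) * (deriv f x * (inverse (f x) * inverse (f x))))"
    using Suc.prems by (intro times_differentiable_cmult times_differentiable_mult) auto
  ultimately show ?case using D by (auto simp: real_differentiable_def)
qed simp

lemma times_differentiable_affine:
  "times_differentiable n f \<Longrightarrow> times_differentiable n (\<lambda>x. f (a * x + b))"
proof (induction n arbitrary: f)
  case (Suc n)
  have "((\<lambda>x. a * x + b) has_real_derivative a) (at x)" for x
    by (auto intro!: derivative_eq_intros)
  then have D: "((\<lambda>x. f (a * x + b)) has_real_derivative a * deriv f (a * x + b)) (at x)" for x
    by (rule DERIV_cong[OF DERIV_chain2[OF times_differentiable_Suc_DERIV[OF Suc.prems]]]) simp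
  then have "deriv (\<lambda>x. f (a * x + b)) = (\<lambda>x. a * deriv f (a * x + b))"
    by (rule deriv_eqI)
  then show ?case using Suc D by (auto intro: times_differentiable_cmult simp: real_differentiable_def)
qed simp

lemma smooth_add: "smooth f \<Longrightarrow> smooth g \<Longrightarrow> smooth (\<lambda>x. f x + g x)"
  by (simp add: smooth_def times_differentiable_add)

lemma smooth_cmult: "smooth f \<Longrightarrow> smooth (\<lambda>x. c * f x)"
  by (simp add: smooth_def times_differentiable_cmult)

lemma smooth_diff: "smooth f \<Longrightarrow> smooth g \<Longrightarrow> smooth (\<lambda>x. f x - g x)"
  using smooth_add[of f "\<lambda>x. (-1) * g x"] smooth_cmult[of g "-1"] by simp

lemma smooth_divide: "smooth f \<Longrightarrow> smooth g \<Longrightarrow> (\<And>x. g x \<noteq> 0) \<Longrightarrow> smooth (\<lambda>x. f x / g x)"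
  by (simp add: smooth_def divide_inverse times_differentiable_mult times_differentiable_inverse)

lemma smooth_affine: "smooth f \<Longrightarrow> smooth (\<lambda>x. f (a * x + b))"
  by (simp add: smooth_def times_differentiable_affine)

lemma smooth_deriv: "smooth f \<Longrightarrow> smooth (deriv f)"
  unfolding smooth_def by (metis times_differentiable.simps(2))

lemma smooth_DERIV: "smooth f \<Longrightarrow> (f has_real_derivative deriv f x) (at x)"
  using times_differentiable_Suc_DERIV smooth_def by blast

lemma smooth_imp_continuous: "smooth f \<Longrightarrow> continuous_on A f"
  by (meson DERIV_isCont continuous_at_imp_continuous_on smooth_DERIV)

lemma smooth_imp_borel_measurable: "smooth f \<Longrightarrow> f \<in> borel_measurable lborel"
  using borel_measurable_continuous_onI[OF smooth_imp_continuous] by simp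

lemma smooth_antiderivative:
  assumes "\<And>x. (F has_real_derivative f x) (at x)" "smooth f"
  shows "smooth F"
  unfolding smooth_def
proof
  fix n
  have "times_differentiable (Suc n) F"
    using assms deriv_eqI[of F f] by (auto simp: smooth_def real_differentiable_def)
  then show "times_differentiable n F" by (rule times_differentiable_Suc_imp)
qed

section \<open>Bump and plateau functions\<close>

text \<open>The derivative of \<open>P(1/x) exp(-1/x)\<close> has the same form with another polynomial;
  this makes \<open>exp(-1/x)\<close>, extended by 0 to \<open>x \<le> 0\<close>, smooth.\<close>
definition flat_poly_exp :: "real poly \<Rightarrow> real \<Rightarrow> real" where
  "flat_poly_exp P x = (if 0 < x then poly P (1/x) * exp (-1/x) else 0)"

lemma poly_div_exp_tendsto_0:
  fixes P :: "real poly"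
  shows "((\<lambda>z. poly P z / exp z) \<longlongrightarrow> 0) at_top"
proof -
  have "((\<lambda>z. \<Sum>i\<le>degree P. coeff P i * (z ^ i / exp z)) \<longlongrightarrow> (\<Sum>i\<le>degree P. coeff P i * 0)) at_top"
    by (intro tendsto_sum tendsto_mult tendsto_const tendsto_power_div_exp_0)
  then show ?thesis
    by (simp add: poly_altdef sum_divide_distrib)
qed

lemma flat_poly_exp_has_derivative_at_0: "(flat_poly_exp P has_real_derivative 0) (at 0)"
proof -
  have "((\<lambda>y. (flat_poly_exp P y - flat_poly_exp P 0) / y) \<longlongrightarrow> 0) (at_left 0)"
    by (rule tendsto_eventually)
       (auto simp: flat_poly_exp_def eventually_at_left_field intro: exI[of _ "-1"])
  moreover have "((\<lambda>y. (flat_poly_exp P y - flat_poly_exp P 0) / y) \<longlongrightarrow> 0) (at_right 0)"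
  proof (rule Lim_transform_eventually)
    show "((\<lambda>y. poly ([:0,1:] * P) (inverse y) / exp (inverse y)) \<longlongrightarrow> 0) (at_right 0)"
      by (rule filterlim_compose[OF poly_div_exp_tendsto_0 filterlim_inverse_at_top_right])
    show "\<forall>\<^sub>F y in at_right 0. poly ([:0,1:] * P) (inverse y) / exp (inverse y) =
        (flat_poly_exp P y - flat_poly_exp P 0) / y"
      unfolding eventually_at_right_field
      by (auto simp: flat_poly_exp_def exp_minus field_simps intro!: exI[of _ 1])
  qed
  ultimately show ?thesis
    by (simp add: has_field_derivative_iff filterlim_at_split)
qed

lemma flat_poly_exp_has_derivative:
  "(flat_poly_exp P has_real_derivative flat_poly_exp ([:0,0,1:] * (P - pderiv P)) x) (at x)"
proof (cases x "0::real" rule: linorder_cases)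
  case less
  show ?thesis
    by (rule has_field_derivative_transform_within_open[of "\<lambda>_. 0" _ _ "{..<0}"])
       (use less in \<open>auto simp: flat_poly_exp_def\<close>)
next
  case equal
  then show ?thesis using flat_poly_exp_has_derivative_at_0 by (simp add: flat_poly_exp_def)
next
  case greater
  have "((\<lambda>y. poly P (1/y) * exp (-1/y)) has_real_derivative
       poly (pderiv P) (1/x) * (- 1 / x^2) * exp (-1/x) + exp (-1/x) * (1 / x^2) * poly P (1/x)) (at x)"
    by (intro DERIV_mult DERIV_chain2[OF poly_DERIV] DERIV_chain2[OF DERIV_exp])
       (use greater in \<open>auto intro!: derivative_eq_intros simp: power2_eq_square\<close>)
  also have "poly (pderiv P) (1/x) * (- 1 / x^2) * exp (-1/x) + exp (-1/x) * (1 / x^2) * poly P (1/x)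
      = poly ([:0,0,1:] * (P - pderiv P)) (1/x) * exp (-1/x)"
    by (simp add: power2_eq_square algebra_simps)
  also have "\<dots> = flat_poly_exp ([:0,0,1:] * (P - pderiv P)) x"
    using greater by (simp add: flat_poly_exp_def)
  finally show ?thesis
    by (rule has_field_derivative_transform_within_open[of _ _ _ "{0<..}"])
       (use greater in \<open>auto simp: flat_poly_exp_def\<close>)
qed

lemma smooth_flat_poly_exp: "smooth (flat_poly_exp P)"
  unfolding smooth_def
proof
  fix n show "times_differentiable n (flat_poly_exp P)"
  proof (induction n arbitrary: P)
    case (Suc n)
    have "deriv (flat_poly_exp P) = flat_poly_exp ([:0,0,1:] * (P - pderiv P))"
      by (rule deriv_eqI, rule flat_poly_exp_has_derivative)
    then show ?case using Suc flat_poly_exp_has_derivative real_differentiable_def by auto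
  qed simp
qed

lemma flat_poly_exp_1_nonneg: "flat_poly_exp 1 x \<ge> 0"
  by (simp add: flat_poly_exp_def)

lemma flat_poly_exp_1_pos: "x > 0 \<Longrightarrow> flat_poly_exp 1 x > 0"
  by (simp add: flat_poly_exp_def)

lemma flat_poly_exp_1_eq_0: "x \<le> 0 \<Longrightarrow> flat_poly_exp 1 x = 0"
  by (simp add: flat_poly_exp_def)

lemma flat_poly_exp_1_mono: "x \<le> y \<Longrightarrow> flat_poly_exp 1 x \<le> flat_poly_exp 1 y"
  by (auto simp: flat_poly_exp_def frac_le)

definition smooth_step :: "real \<Rightarrow> real" where
  "smooth_step x = flat_poly_exp 1 x / (flat_poly_exp 1 x + flat_poly_exp 1 (1 - x))"

definition bump :: "real \<Rightarrow> real" where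
  "bump = deriv smooth_step"

lemma smooth_step_denominator_pos: "flat_poly_exp 1 x + flat_poly_exp 1 (1 - x) > 0"
proof (cases "x > 0")
  case True
  then show ?thesis using flat_poly_exp_1_pos[of x] flat_poly_exp_1_nonneg[of "1 - x"] by linarith
next
  case False
  then show ?thesis using flat_poly_exp_1_pos[of "1 - x"] flat_poly_exp_1_nonneg[of x] by linarith
qed

lemma smooth_smooth_step: "smooth smooth_step"
proof -
  have "smooth (\<lambda>x. flat_poly_exp 1 ((-1) * x + 1))"
    by (intro smooth_affine smooth_flat_poly_exp)
  then show ?thesis
    unfolding smooth_step_def using smooth_step_denominator_pos
    by (intro smooth_divide smooth_add smooth_flat_poly_exp) (auto simp: less_le)
qed

lemma smooth_step_eq_0: "x \<le> 0 \<Longrightarrow> smooth_step x = 0"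
  by (simp add: smooth_step_def flat_poly_exp_1_eq_0)

lemma smooth_step_eq_1: "x \<ge> 1 \<Longrightarrow> smooth_step x = 1"
  using flat_poly_exp_1_pos[of x] by (simp add: smooth_step_def flat_poly_exp_1_eq_0)

lemma smooth_step_nonneg: "smooth_step x \<ge> 0"
  using smooth_step_denominator_pos[of x] flat_poly_exp_1_nonneg[of x] by (simp add: smooth_step_def)

lemma smooth_step_le_1: "smooth_step x \<le> 1"
  using smooth_step_denominator_pos[of x] flat_poly_exp_1_nonneg[of "1 - x"] by (simp add: smooth_step_def)

lemma smooth_step_mono: "x \<le> y \<Longrightarrow> smooth_step x \<le> smooth_step y"
proof -
  assume "x \<le> y"
  let ?e = "flat_poly_exp 1"
  have cross_mult: "a / (a + a') \<le> b / (b + b')"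
    if "0 < a + a'" "0 < b + b'" "a * (b + b') \<le> b * (a + a')" for a a' b b' :: real
    using that by (simp add: divide_simps mult.commute)
  have "?e x * ?e (1 - y) \<le> ?e y * ?e (1 - x)"
    using \<open>x \<le> y\<close> by (intro mult_mono flat_poly_exp_1_mono flat_poly_exp_1_nonneg) auto
  then have "?e x * (?e y + ?e (1 - y)) \<le> ?e y * (?e x + ?e (1 - x))"
    by (simp add: algebra_simps)
  then show ?thesis
    unfolding smooth_step_def by (intro cross_mult smooth_step_denominator_pos)
qed

lemma smooth_step_has_derivative: "(smooth_step has_real_derivative bump x) (at x)"
  unfolding bump_def by (rule smooth_DERIV[OF smooth_smooth_step])

lemma smooth_bump: "smooth bump"
  unfolding bump_def by (rule smooth_deriv[OF smooth_smooth_step])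

lemma bump_nonneg: "bump x \<ge> 0"
proof (rule tendsto_lowerbound)
  show "((\<lambda>y. (smooth_step y - smooth_step x) / (y - x)) \<longlongrightarrow> bump x) (at x)"
    using smooth_step_has_derivative by (simp add: has_field_derivative_iff)
  show "\<forall>\<^sub>F y in at x. 0 \<le> (smooth_step y - smooth_step x) / (y - x)"
  proof (intro always_eventually allI)
    fix y
    show "0 \<le> (smooth_step y - smooth_step x) / (y - x)"
      using smooth_step_mono[of x y] smooth_step_mono[of y x]
      by (cases "x \<le> y") (auto simp: zero_le_divide_iff)
  qed
qed simp

lemma bump_eq_0: "x \<le> 0 \<or> x \<ge> 1 \<Longrightarrow> bump x = 0"
proof (elim disjE)
  assume "x \<le> 0"
  show ?thesis
    by (rule DERIV_local_min[OF smooth_step_has_derivative, of 1])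
       (use smooth_step_nonneg smooth_step_eq_0[OF \<open>x \<le> 0\<close>] in auto)
next
  assume "x \<ge> 1"
  show ?thesis
    by (rule DERIV_local_max[OF smooth_step_has_derivative, of 1])
       (use smooth_step_le_1 smooth_step_eq_1[OF \<open>x \<ge> 1\<close>] in auto)
qed

lemma smooth_shift_scale: "smooth f \<Longrightarrow> smooth (\<lambda>z. f (k * (z - s) + c))"
  using smooth_affine[of f k "c - k * s"] by (simp add: algebra_simps)

lemma smooth_step_shift_scale_has_derivative:
  "((\<lambda>z. smooth_step (k * (z - s) + c)) has_real_derivative k * bump (k * (x - s) + c)) (at x)"
proof -
  have "((\<lambda>z. k * (z - s) + c) has_real_derivative k) (at x)"
    by (auto intro!: derivative_eq_intros)
  from DERIV_chain2[OF smooth_step_has_derivative this] show ?thesis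
    by (simp add: mult.commute)
qed

lemma eventually_le_real_mult: "c > 0 \<Longrightarrow> \<forall>\<^sub>F n in sequentially. b \<le> real n * c"
  using filterlim_tendsto_pos_mult_at_top[OF tendsto_const _ filterlim_real_sequentially, of c]
  by (simp add: filterlim_at_top mult.commute)

text \<open>The plateau rises from 0 to 1 on \<open>[s + 1/k, s + 2/k]\<close> and falls back to 0
  on \<open>[t - 2/k, t - 1/k]\<close>.\<close>
definition plateau :: "real \<Rightarrow> real \<Rightarrow> real \<Rightarrow> real \<Rightarrow> real" where
  "plateau k s t z = smooth_step (k * (z - s) - 1) - smooth_step (k * (z - t) + 2)"

lemma smooth_plateau: "smooth (plateau k s t)"
proof -
  have "smooth (\<lambda>z. smooth_step (k * (z - s) + (-1)) - smooth_step (k * (z - t) + 2))"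
    by (intro smooth_diff smooth_shift_scale smooth_smooth_step)
  then show ?thesis by (simp add: plateau_def[abs_def])
qed

lemma deriv_plateau:
  "deriv (plateau k s t) = (\<lambda>z. k * bump (k * (z - s) - 1) - k * bump (k * (z - t) + 2))"
  unfolding plateau_def[abs_def]
  using DERIV_diff[OF smooth_step_shift_scale_has_derivative[of k s "-1"]
                      smooth_step_shift_scale_has_derivative[of k t 2]]
  by (intro deriv_eqI) simp

lemma abs_plateau_le_1: "\<bar>plateau k s t z\<bar> \<le> 1"
  using smooth_step_nonneg smooth_step_le_1 unfolding plateau_def abs_le_iff
  by (smt (verit))

lemma plateau_eq_1: "2 \<le> k * (z - s) \<Longrightarrow> 2 \<le> k * (t - z) \<Longrightarrow> plateau k s t z = 1"
  by (simp add: plateau_def smooth_step_eq_0 smooth_step_eq_1 right_diff_distrib)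

lemma plateau_eq_0_left: "k * (z - s) \<le> 1 \<Longrightarrow> 2 \<le> k * (t - z) \<Longrightarrow> plateau k s t z = 0"
  by (simp add: plateau_def smooth_step_eq_0 right_diff_distrib)

lemma plateau_eq_0_right: "2 \<le> k * (z - s) \<Longrightarrow> k * (t - z) \<le> 1 \<Longrightarrow> plateau k s t z = 0"
  by (simp add: plateau_def smooth_step_eq_1 right_diff_distrib)

lemma plateau_nonzero_imp:
  assumes "k > 0" "k * (t - s) \<ge> 3" "plateau k s t z \<noteq> 0"
  shows "s + 1/k < z \<and> z < t - 1/k"
proof (rule ccontr)
  assume "\<not> (s + 1/k < z \<and> z < t - 1/k)"
  then have "k * (z - s) \<le> 1 \<or> k * (t - z) \<le> 1"
    using assms(1) by (auto simp: field_simps)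
  moreover have "k * (z - s) + k * (t - z) \<ge> 3"
    using assms(2) by (simp add: algebra_simps)
  ultimately show False
    using assms(3) plateau_eq_0_left plateau_eq_0_right by force
qed

lemma test_fun_plateau:
  assumes "0 \<le> s" "t \<le> L" "k > 0" "k * (t - s) \<ge> 3"
  shows "test_fun L (plateau k s t)"
  unfolding test_fun_iff
proof (intro conjI exI[of _ "1/k"] allI impI)
  fix x assume "plateau k s t x \<noteq> 0"
  with plateau_nonzero_imp[OF assms(3,4)] assms show "x \<in> {1/k..L - 1/k}"
    by fastforce
qed (use assms smooth_plateau in auto)

lemma plateau_tendsto_indicator:
  assumes "s < t"
  shows "(\<lambda>n. plateau (real n) s t z) \<longlonglongrightarrow> indicator {s<..<t} z"
proof (rule tendsto_eventually)
  consider "z \<le> s" | "s < z" "z < t" | "t \<le> z" by linarith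
  then show "\<forall>\<^sub>F n in sequentially. plateau (real n) s t z = indicator {s<..<t} z"
  proof cases
    case 1
    with assms have "\<forall>\<^sub>F n in sequentially. 2 \<le> real n * (t - z)"
      by (intro eventually_le_real_mult) auto
    moreover have "real n * (z - s) \<le> 1" for n
      using 1 mult_nonneg_nonpos[of "real n" "z - s"] by simp
    ultimately show ?thesis
      using 1 by (auto elim!: eventually_mono intro: plateau_eq_0_left)
  next
    case 2
    then have "\<forall>\<^sub>F n in sequentially. 2 \<le> real n * (z - s) \<and> 2 \<le> real n * (t - z)"
      by (intro eventually_conj eventually_le_real_mult) auto
    then show ?thesis
      by eventually_elim (use 2 in \<open>simp add: plateau_eq_1\<close>)
  next
    case 3
    with assms have "\<forall>\<^sub>F n in sequentially. 2 \<le> real n * (z - s)"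
      by (intro eventually_le_real_mult) auto
    moreover have "real n * (t - z) \<le> 1" for n
      using 3 mult_nonneg_nonpos[of "real n" "t - z"] by simp
    ultimately show ?thesis
      using 3 by (auto elim!: eventually_mono intro: plateau_eq_0_right)
  qed
qed

section \<open>Integration over an interval\<close>

lemma set_integrable_continuous_on_Icc:
  fixes h :: "real \<Rightarrow> real"
  shows "continuous_on {a..b} h \<Longrightarrow> set_integrable lborel {a<..<b} h"
  by (rule set_integrable_subset[OF borel_integrable_atLeastAtMost']) auto

lemma set_integrable_imp_set_borel_measurable:
  "set_integrable M A f \<Longrightarrow> set_borel_measurable M A f"
  unfolding set_integrable_def set_borel_measurable_def by (rule borel_measurable_integrable)

lemma set_integrable_if_L2_on:
  assumes "L2_on L f"
  shows "set_integrable lborel {0<..<L} f"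
proof (rule set_integrable_bound)
  show "set_integrable lborel {0<..<L} (\<lambda>x. 1 + (f x)\<^sup>2)"
    using assms set_integrable_continuous_on_Icc[of 0 L "\<lambda>_. 1"]
    by (intro set_integral_add) (auto simp: L2_on_def)
  show "set_borel_measurable lborel {0<..<L} f"
    using assms by (simp add: L2_on_def)
  have "\<bar>y\<bar> \<le> 1 + y\<^sup>2" for y :: real
  proof (cases "\<bar>y\<bar> \<le> 1")
    case False
    then have "\<bar>y\<bar> * 1 \<le> \<bar>y\<bar> * \<bar>y\<bar>" by (intro mult_left_mono) auto
    then show ?thesis by (simp add: power2_eq_square)
  qed (use zero_le_power2[of y] in linarith)
  then show "AE x in lborel. x \<in> {0<..<L} \<longrightarrow> norm (f x) \<le> norm (1 + (f x)\<^sup>2)"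
    by auto
qed

lemma set_integrable_mult_bounded:
  fixes f h :: "'a \<Rightarrow> real"
  assumes f: "set_integrable M A f" and h: "set_borel_measurable M A h"
    and bound: "AE x in M. x \<in> A \<longrightarrow> \<bar>h x\<bar> \<le> B"
  shows "set_integrable M A (\<lambda>x. h x * f x)"
proof (rule set_integrable_bound)
  show "set_integrable M A (\<lambda>x. B * f x)"
    using f by simp
  have "(\<lambda>x. (indicator A x *\<^sub>R h x) * (indicator A x *\<^sub>R f x)) \<in> borel_measurable M"
    using h set_integrable_imp_set_borel_measurable[OF f] unfolding set_borel_measurable_def by measurable
  moreover have "(\<lambda>x. (indicator A x *\<^sub>R h x) * (indicator A x *\<^sub>R f x)) = (\<lambda>x. indicator A x *\<^sub>R (h x * f x))"
    by (auto simp: indicator_def)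
  ultimately show "set_borel_measurable M A (\<lambda>x. h x * f x)"
    unfolding set_borel_measurable_def by simp
  show "AE x in M. x \<in> A \<longrightarrow> norm (h x * f x) \<le> norm (B * f x)"
    using bound by eventually_elim (auto simp: abs_mult intro: mult_right_mono)
qed

lemma set_integrable_mult_continuous_on_Icc:
  fixes f h :: "real \<Rightarrow> real"
  assumes f: "set_integrable lborel {a<..<b} f" and h: "continuous_on {a..b} h"
  shows "set_integrable lborel {a<..<b} (\<lambda>x. f x * h x)"
proof -
  obtain B where "\<forall>y \<in> h ` {a..b}. norm y \<le> B"
    using compact_imp_bounded[OF compact_continuous_image[OF h compact_Icc]] bounded_iff by metis
  then have "AE x in lborel. x \<in> {a<..<b} \<longrightarrow> \<bar>h x\<bar> \<le> B"
    by auto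
  with set_integrable_imp_set_borel_measurable[OF set_integrable_continuous_on_Icc[OF h]]
  have "set_integrable lborel {a<..<b} (\<lambda>x. h x * f x)"
    by (rule set_integrable_mult_bounded[OF f])
  then show ?thesis
    by (simp only: mult.commute)
qed

lemma set_integral_mult_indicator_subset:
  fixes f :: "'a \<Rightarrow> real"
  assumes "B \<subseteq> A"
  shows "(LINT x:A|M. f x * indicator B x) = (LINT x:B|M. f x)"
  unfolding set_lebesgue_integral_def
  by (rule Bochner_Integration.integral_cong) (use assms in \<open>auto simp: indicator_def\<close>)

lemma set_lebesgue_integral_cong_AE_set_measurable:
  fixes f g :: "'a \<Rightarrow> real"
  assumes "set_borel_measurable M A f" "set_borel_measurable M A g"
    and "AE x in M. x \<in> A \<longrightarrow> f x = g x"
  shows "(LINT x:A|M. f x) = (LINT x:A|M. g x)"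
  unfolding set_lebesgue_integral_def
  by (rule integral_cong_AE) (use assms in \<open>auto simp: set_borel_measurable_def\<close>)

lemma set_integral_mult_tendsto:
  fixes f :: "'a \<Rightarrow> real" and h :: "nat \<Rightarrow> 'a \<Rightarrow> real"
  assumes f: "set_integrable M A f"
    and h: "\<And>n. h n \<in> borel_measurable M" "\<And>n x. \<bar>h n x\<bar> \<le> 1"
    and lim: "\<And>x. (\<lambda>n. h n x) \<longlonglongrightarrow> H x"
  shows "(\<lambda>n. LINT x:A|M. f x * h n x) \<longlonglongrightarrow> (LINT x:A|M. f x * H x)"
  unfolding set_lebesgue_integral_def
proof (rule integral_dominated_convergence[where w = "\<lambda>x. norm (indicator A x *\<^sub>R f x)"])
  have fm: "(\<lambda>x. indicator A x *\<^sub>R f x) \<in> borel_measurable M"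
    using f unfolding set_integrable_def by (rule borel_measurable_integrable)
  have "H \<in> borel_measurable M"
    using lim h(1) by (rule borel_measurable_LIMSEQ_real)
  with fm have "(\<lambda>x. (indicator A x *\<^sub>R f x) * H x) \<in> borel_measurable M"
    by measurable
  then show "(\<lambda>x. indicator A x *\<^sub>R (f x * H x)) \<in> borel_measurable M"
    by (simp add: mult.assoc)
  fix n
  from fm h(1) have "(\<lambda>x. (indicator A x *\<^sub>R f x) * h n x) \<in> borel_measurable M"
    by measurable
  then show "(\<lambda>x. indicator A x *\<^sub>R (f x * h n x)) \<in> borel_measurable M"
    by (simp add: mult.assoc)
  show "AE x in M. norm (indicator A x *\<^sub>R (f x * h n x)) \<le> norm (indicator A x *\<^sub>R f x)"
    using h(2) by (intro AE_I2) (auto simp: abs_mult indicator_def intro: mult_left_le)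
next
  show "integrable M (\<lambda>x. norm (indicator A x *\<^sub>R f x))"
    using f unfolding set_integrable_def by (rule integrable_norm)
  show "AE x in M. (\<lambda>n. indicator A x *\<^sub>R (f x * h n x)) \<longlonglongrightarrow> indicator A x *\<^sub>R (f x * H x)"
    by (intro AE_I2 tendsto_scaleR tendsto_mult tendsto_const lim)
qed

lemma integral_scaled_bump:
  assumes "a \<le> b" "k * (a - p) + c \<le> 0" "k * (b - p) + c \<ge> 1"
  shows "(LINT z:{a<..<b}|lborel. k * bump (k * (z - p) + c)) = 1"
proof -
  have "(LBINT z=a..b. k * bump (k * (z - p) + c)) =
      smooth_step (k * (b - p) + c) - smooth_step (k * (a - p) + c)"
  proof (rule interval_integral_FTC_finite)
    show "continuous_on {min a b..max a b} (\<lambda>z. k * bump (k * (z - p) + c))"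
      by (intro smooth_imp_continuous smooth_cmult smooth_shift_scale smooth_bump)
    fix x
    show "((\<lambda>z. smooth_step (k * (z - p) + c)) has_vector_derivative k * bump (k * (x - p) + c))
        (at x within {min a b..max a b})"
      using smooth_step_shift_scale_has_derivative
      by (simp add: has_real_derivative_iff_has_vector_derivative has_vector_derivative_at_within)
  qed
  with assms show ?thesis
    by (simp add: smooth_step_eq_0 smooth_step_eq_1 interval_lebesgue_integral_def)
qed

lemma abs_weighted_average_diff_le:
  fixes W r :: "real \<Rightarrow> real"
  assumes W: "continuous_on {a..b} W" and r: "continuous_on {a..b} r" "\<And>z. r z \<ge> 0"
    and r_int: "(LINT z:{a<..<b}|lborel. r z) = 1"
    and close: "\<And>z. z \<in> {a<..<b} \<Longrightarrow> r z \<noteq> 0 \<Longrightarrow> \<bar>W z - w\<bar> \<le> \<epsilon>"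
  shows "\<bar>(LINT z:{a<..<b}|lborel. W z * r z) - w\<bar> \<le> \<epsilon>"
proof -
  have int: "set_integrable lborel {a<..<b} (\<lambda>z. f z * r z)" if "continuous_on {a..b} f" for f
    by (intro set_integrable_continuous_on_Icc continuous_on_mult that r)
  have "\<bar>(LINT z:{a<..<b}|lborel. W z * r z) - w\<bar> = \<bar>LINT z:{a<..<b}|lborel. (W z - w) * r z\<bar>"
    using r_int int[OF W] int[OF continuous_on_const]
    by (simp add: left_diff_distrib set_integral_diff(2))
  also have "\<dots> \<le> (LINT z:{a<..<b}|lborel. \<bar>W z - w\<bar> * r z)"
    using set_integral_norm_bound[OF int] W r by (simp add: abs_mult continuous_intros)
  also have "\<dots> \<le> (LINT z:{a<..<b}|lborel. \<epsilon> * r z)"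
  proof (intro set_integral_mono int)
    show "\<bar>W z - w\<bar> * r z \<le> \<epsilon> * r z" if "z \<in> {a<..<b}" for z
      using close[OF that] r(2)[of z] by (cases "r z = 0") (auto intro: mult_right_mono)
  qed (auto intro!: continuous_intros W)
  also have "\<dots> = \<epsilon>"
    using r_int by simp
  finally show ?thesis .
qed

section \<open>Weak derivatives\<close>

lemma mollify_tendsto:
  fixes W :: "real \<Rightarrow> real"
  assumes W: "continuous_on {a..b} W" and p: "a < p" "p < b"
  shows "(\<lambda>n. LINT z:{a<..<b}|lborel. W z * (real n * bump (real n * (z - p) + c))) \<longlonglongrightarrow> W p"
  unfolding tendsto_iff dist_real_def
proof (intro allI impI)
  fix e :: real assume "e > 0"
  obtain d where "d > 0" and d: "\<And>z. z \<in> {a..b} \<Longrightarrow> \<bar>z - p\<bar> < d \<Longrightarrow> \<bar>W z - W p\<bar> < e/2"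
    using W p \<open>e > 0\<close> unfolding continuous_on_iff dist_real_def
    by (metis atLeastAtMost_iff half_gt_zero less_imp_le)
  have "\<forall>\<^sub>F n in sequentially.
      \<bar>c\<bar> + 1 \<le> real n * (p - a) \<and> \<bar>c\<bar> + 1 \<le> real n * (b - p) \<and> \<bar>c\<bar> + 1 \<le> real n * d"
    using p \<open>d > 0\<close> by (intro eventually_conj eventually_le_real_mult) auto
  then show "\<forall>\<^sub>F n in sequentially.
      \<bar>(LINT z:{a<..<b}|lborel. W z * (real n * bump (real n * (z - p) + c))) - W p\<bar> < e"
  proof eventually_elim
    case (elim n)
    have "\<bar>W z - W p\<bar> \<le> e/2" if "z \<in> {a<..<b}" "real n * bump (real n * (z - p) + c) \<noteq> 0" for z
    proof -
      have "\<not> (real n * (z - p) + c \<le> 0 \<or> real n * (z - p) + c \<ge> 1)"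
        using that(2) bump_eq_0 by auto
      then have "\<bar>real n * (z - p)\<bar> < real n * d"
        using elim by linarith
      then have "\<bar>z - p\<bar> < d"
        by (simp add: abs_mult mult_less_cancel_left)
      with that(1) d show ?thesis
        by (simp add: less_imp_le)
    qed
    moreover have "(LINT z:{a<..<b}|lborel. real n * bump (real n * (z - p) + c)) = 1"
      by (rule integral_scaled_bump) (use elim p in \<open>auto simp: algebra_simps\<close>)
    ultimately have
      "\<bar>(LINT z:{a<..<b}|lborel. W z * (real n * bump (real n * (z - p) + c))) - W p\<bar> \<le> e/2"
      by (intro abs_weighted_average_diff_le W smooth_imp_continuous smooth_cmult smooth_shift_scale
          smooth_bump)
         (auto simp: bump_nonneg)
    with \<open>e > 0\<close> show ?case
      by simp
  qed
qed

lemma mollify_tendsto_AE: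
  fixes u W :: "real \<Rightarrow> real"
  assumes u: "set_integrable lborel {a<..<b} u" and W: "continuous_on {a..b} W"
    and uW: "AE x in lborel. x \<in> {a<..<b} \<longrightarrow> u x = W x" and p: "a < p" "p < b"
  shows "(\<lambda>n. LINT z:{a<..<b}|lborel. u z * (real n * bump (real n * (z - p) + c))) \<longlonglongrightarrow> W p"
proof -
  have r: "continuous_on {a..b} (\<lambda>z. real n * bump (real n * (z - p) + c))" for n
    by (intro smooth_imp_continuous smooth_cmult smooth_shift_scale smooth_bump)
  have "(LINT z:{a<..<b}|lborel. u z * (real n * bump (real n * (z - p) + c))) =
        (LINT z:{a<..<b}|lborel. W z * (real n * bump (real n * (z - p) + c)))" for n
    using uW
    by (intro set_lebesgue_integral_cong_AE_set_measurable set_integrable_imp_set_borel_measurable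
          set_integrable_mult_continuous_on_Icc u r set_integrable_continuous_on_Icc W)
       auto
  with mollify_tendsto[OF W p] show ?thesis
    by simp
qed

text \<open>The derivative of \<open>plateau n s t\<close> is the difference of two mollifiers concentrating
  at \<open>s\<close> and at \<open>t\<close>.\<close>
lemma weak_deriv_on_integral:
  fixes u v W :: "real \<Rightarrow> real"
  assumes u: "set_integrable lborel {0<..<L} u" and v: "set_integrable lborel {0<..<L} v"
    and uv: "weak_deriv_on L u v"
    and W: "continuous_on {0..L} W" and uW: "AE x in lborel. x \<in> {0<..<L} \<longrightarrow> u x = W x"
    and st: "0 < s" "s < t" "t < L"
  shows "W t - W s = (LINT z:{s<..<t}|lborel. v z)"
proof -
  define m where "m n p c = (LINT z:{0<..<L}|lborel. u z * (real n * bump (real n * (z - p) + c)))"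
    for n p c
  have "\<forall>\<^sub>F n in sequentially. 3 \<le> real n * (t - s)"
    using st by (intro eventually_le_real_mult) auto
  then have ev: "\<forall>\<^sub>F n in sequentially.
      - (LINT z:{0<..<L}|lborel. v z * plateau (real n) s t z) = m n s (-1) - m n t 2"
  proof eventually_elim
    case (elim n)
    then have "real n > 0"
      using st by (cases n) auto
    with elim st have "test_fun L (plateau (real n) s t)"
      by (intro test_fun_plateau) auto
    with uv have "(LINT z:{0<..<L}|lborel. u z * deriv (plateau (real n) s t) z) =
        - (LINT z:{0<..<L}|lborel. v z * plateau (real n) s t z)"
      by (simp add: weak_deriv_on_def)
    moreover have int:
      "set_integrable lborel {0<..<L} (\<lambda>z. u z * (real n * bump (real n * (z - p) + c)))" for p c
      by (intro set_integrable_mult_continuous_on_Icc u smooth_imp_continuous smooth_cmult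
          smooth_shift_scale smooth_bump)
    have "(LINT z:{0<..<L}|lborel. u z * deriv (plateau (real n) s t) z) = m n s (-1) - m n t 2"
      unfolding m_def deriv_plateau using set_integral_diff(2)[OF int[of s "-1"] int[of t 2]]
      by (simp add: right_diff_distrib)
    ultimately show ?case
      by simp
  qed
  have "(\<lambda>n. - (LINT z:{0<..<L}|lborel. v z * plateau (real n) s t z))
      \<longlonglongrightarrow> - (LINT z:{0<..<L}|lborel. v z * indicator {s<..<t} z)"
    by (intro tendsto_minus set_integral_mult_tendsto[OF v smooth_imp_borel_measurable[OF smooth_plateau]
        abs_plateau_le_1 plateau_tendsto_indicator[OF st(2)]])
  from Lim_transform_eventually[OF this ev]
  have "(\<lambda>n. m n s (-1) - m n t 2) \<longlonglongrightarrow> - (LINT z:{0<..<L}|lborel. v z * indicator {s<..<t} z)" .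
  moreover have "(\<lambda>n. m n s (-1) - m n t 2) \<longlonglongrightarrow> W s - W t"
    unfolding m_def using st by (intro tendsto_diff mollify_tendsto_AE u W uW) auto
  ultimately have "W s - W t = - (LINT z:{0<..<L}|lborel. v z * indicator {s<..<t} z)"
    by (rule LIMSEQ_unique[rotated])
  with st show ?thesis
    by (simp add: set_integral_mult_indicator_subset subset_eq)
qed

section \<open>The du Bois-Reymond lemma\<close>

lemma emeasure_density_greaterThan:
  fixes G :: "real \<Rightarrow> real"
  assumes "integrable lborel G" "\<And>x. 0 \<le> G x"
  shows "emeasure (density lborel G) {y<..} = ennreal (LINT x:{y<..}|lborel. G x)"
proof -
  have "G \<in> borel_measurable lborel"
    using assms(1) by (rule borel_measurable_integrable)
  then have "emeasure (density lborel G) {y<..} = (\<integral>\<^sup>+x. ennreal (indicator {y<..} x *\<^sub>R G x) \<partial>lborel)"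
    by (subst emeasure_density) (auto simp: indicator_def intro!: nn_integral_cong)
  also have "\<dots> = ennreal (LINT x:{y<..}|lborel. G x)"
    unfolding set_lebesgue_integral_def
    using assms by (intro nn_integral_eq_integral integrable_mult_indicator) auto
  finally show ?thesis .
qed

text \<open>The positive and negative parts of \<open>H\<close> are densities of two finite measures
  that agree on all rays, hence coincide.\<close>
lemma AE_eq_0_if_integrals_greaterThan_eq_0:
  fixes H :: "real \<Rightarrow> real"
  assumes H: "integrable lborel H" and zero: "\<And>y. (LINT x:{y<..}|lborel. H x) = 0"
  shows "AE x in lborel. H x = 0"
proof -
  define P N where "P = (\<lambda>x. max 0 (H x))" and "N = (\<lambda>x. max 0 (- H x))"
  have PN: "integrable lborel P" "integrable lborel N" "\<And>x. 0 \<le> P x" "\<And>x. 0 \<le> N x"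
    using H by (auto simp: P_def N_def)
  have "density lborel P = density lborel N"
  proof (rule measure_eqI_lessThan)
    fix y
    show "emeasure (density lborel P) {y<..} < \<infinity>"
      using PN by (simp add: emeasure_density_greaterThan)
    have "set_integrable lborel {y<..} P" "set_integrable lborel {y<..} N"
      using integrable_mult_indicator[OF _ PN(1), of "{y<..}"]
        integrable_mult_indicator[OF _ PN(2), of "{y<..}"]
      by (simp_all add: set_integrable_def)
    then have "(LINT x:{y<..}|lborel. P x) - (LINT x:{y<..}|lborel. N x) =
        (LINT x:{y<..}|lborel. P x - N x)"
      by (simp add: set_integral_diff)
    also have "(\<lambda>x. P x - N x) = H"
      by (auto simp: P_def N_def max_def)
    finally show "emeasure (density lborel P) {y<..} = emeasure (density lborel N) {y<..}"
      using PN zero by (simp add: emeasure_density_greaterThan)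
  qed auto
  then have "AE x in lborel. ennreal (P x) = ennreal (N x)"
    using H by (subst sigma_finite_measure.density_unique_iff[symmetric])
      (auto simp: P_def N_def sigma_finite_lborel)
  then show ?thesis
    by eventually_elim (auto simp: P_def N_def max_def split: if_splits)
qed

lemma AE_eq_0_if_interval_integrals_eq_0:
  fixes h :: "real \<Rightarrow> real"
  assumes h: "set_integrable lborel {a<..<b} h"
    and zero: "\<And>s t. a \<le> s \<Longrightarrow> s < t \<Longrightarrow> t \<le> b \<Longrightarrow> (LINT x:{s<..<t}|lborel. h x) = 0"
  shows "AE x in lborel. x \<in> {a<..<b} \<longrightarrow> h x = 0"
proof -
  have "(LINT x:{y<..}|lborel. indicator {a<..<b} x *\<^sub>R h x) = 0" for y
  proof (cases "y < b")
    case True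
    then have "(LINT x:{y<..}|lborel. indicator {a<..<b} x *\<^sub>R h x) =
        (LINT x:{max y a<..<b}|lborel. h x)"
      unfolding set_lebesgue_integral_def
      by (intro Bochner_Integration.integral_cong) (auto simp: indicator_def)
    also have "\<dots> = 0"
    proof (cases "a < b")
      case True
      with \<open>y < b\<close> show ?thesis by (intro zero) auto
    qed (simp add: set_lebesgue_integral_def)
    finally show ?thesis .
  next
    case False
    then have "indicator {y<..} x *\<^sub>R (indicator {a<..<b} x *\<^sub>R h x) = 0" for x
      by (simp add: indicator_def)
    then show ?thesis
      unfolding set_lebesgue_integral_def by (simp only: Bochner_Integration.integral_zero)
  qed
  with h have "AE x in lborel. indicator {a<..<b} x *\<^sub>R h x = 0"
    unfolding set_integrable_def by (intro AE_eq_0_if_integrals_greaterThan_eq_0)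
  then show ?thesis
    by eventually_elim (auto simp: indicator_def)
qed

lemma interval_integral_has_real_derivative:
  fixes k :: "real \<Rightarrow> real"
  assumes "continuous_on UNIV k"
  shows "((\<lambda>x. LBINT y=ereal 0..ereal x. k y) has_real_derivative k x) (at x)"
proof -
  have "((\<lambda>x. LBINT y=ereal 0..ereal x. k y) has_vector_derivative k x)
      (at x within {min x 0 - 1..max x 0 + 1})"
    by (rule interval_integral_FTC2) (use assms continuous_on_subset in auto)
  moreover have "at x within {min x 0 - 1..max x 0 + 1} = at x"
    by (rule at_within_interior) auto
  ultimately show ?thesis
    by (simp add: has_real_derivative_iff_has_vector_derivative)
qed

lemma test_fun_antiderivative:
  fixes k :: "real \<Rightarrow> real"
  assumes k: "smooth k" and "\<delta> > 0" and supp: "\<And>z. k z \<noteq> 0 \<Longrightarrow> z \<in> {\<delta>..L-\<delta>}"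
    and "L > 0" and int_0: "(LINT z:{0<..<L}|lborel. k z) = 0"
  shows "test_fun L (\<lambda>x. LBINT y=ereal 0..ereal x. k y)"
    and "deriv (\<lambda>x. LBINT y=ereal 0..ereal x. k y) = k"
proof -
  define F where "F x = (LBINT y=ereal 0..ereal x. k y)" for x
  have F': "(F has_real_derivative k x) (at x)" for x
    unfolding F_def by (rule interval_integral_has_real_derivative[OF smooth_imp_continuous[OF k]])
  then show "deriv (\<lambda>x. LBINT y=ereal 0..ereal x. k y) = k"
    unfolding F_def[symmetric] by (rule deriv_eqI)
  have F_const: "F x = F y" if "\<And>z. z \<in> {min x y..max x y} \<Longrightarrow> k z = 0" for x y
  proof -
    have "\<exists>c. \<forall>z\<in>{min x y..max x y}. F z = c"
    proof (rule has_field_derivative_zero_constant)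
      fix z assume "z \<in> {min x y..max x y}"
      with F'[of z] that[of z] show "(F has_field_derivative 0) (at z within {min x y..max x y})"
        by (simp add: has_field_derivative_at_within)
    qed simp
    then show ?thesis
      by auto
  qed
  have "F 0 = 0" "F L = 0"
    using int_0 \<open>L > 0\<close> by (simp_all add: F_def interval_lebesgue_integral_def set_lebesgue_integral_def)
  then have F_eq_0: "F x = 0" if "x \<le> \<delta>/2 \<or> x \<ge> L - \<delta>/2" for x
    using that F_const[of x 0] F_const[of x L] supp \<open>\<delta> > 0\<close> by force
  show "test_fun L (\<lambda>x. LBINT y=ereal 0..ereal x. k y)"
    unfolding F_def[symmetric] test_fun_iff
  proof (intro conjI exI[of _ "\<delta>/2"] allI impI)
    show "smooth F"
      using F' k by (rule smooth_antiderivative)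
    show "x \<in> {\<delta>/2..L - \<delta>/2}" if "F x \<noteq> 0" for x
      using that F_eq_0[of x] by fastforce
  qed (use \<open>\<delta> > 0\<close> in simp)
qed

lemma normalized_test_fun_exists:
  assumes "L > 0"
  obtains r where "test_fun L r" "(LINT z:{0<..<L}|lborel. r z) = 1"
proof
  define k :: real where "k = 4 / L"
  define r where "r z = k * bump (k * (z - L/4) + 0)" for z
  have "k * (L/4) = 1"
    using assms by (simp add: k_def)
  have "z \<in> {L/4..L - L/4}" if "r z \<noteq> 0" for z
  proof -
    have "\<not> (k * (z - L/4) \<le> 0 \<or> k * (z - L/4) \<ge> 1)"
      using that bump_eq_0 by (auto simp: r_def)
    then have "k * 0 < k * (z - L/4)" "k * (z - L/4) < k * (L/4)"
      using \<open>k * (L/4) = 1\<close> by auto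
    moreover have "k > 0"
      using assms by (simp add: k_def)
    ultimately have "0 < z - L/4" "z - L/4 < L/4"
      by (simp_all only: mult_less_cancel_left_pos)
    then show ?thesis
      by simp
  qed
  moreover have "smooth r"
    unfolding r_def by (intro smooth_cmult smooth_shift_scale smooth_bump)
  ultimately show "test_fun L r"
    unfolding test_fun_iff using assms by (intro conjI exI[of _ "L/4"]) auto
  show "(LINT z:{0<..<L}|lborel. r z) = 1"
    unfolding r_def using assms \<open>k * (L/4) = 1\<close>
    by (intro integral_scaled_bump) (auto simp: k_def algebra_simps)
qed

text \<open>\<open>\<theta> - (\<integral>\<theta>) r\<close> has mean zero, so it is the derivative of a test function.\<close>
lemma integral_mult_test_fun_factor:
  fixes F :: "real \<Rightarrow> real"
  assumes "L > 0" and F: "set_integrable lborel {0<..<L} F"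
    and orth: "\<And>\<psi>. test_fun L \<psi> \<Longrightarrow> (LINT z:{0<..<L}|lborel. F z * deriv \<psi> z) = 0"
    and r: "test_fun L r" "(LINT z:{0<..<L}|lborel. r z) = 1"
    and \<theta>: "test_fun L \<theta>"
  shows "(LINT z:{0<..<L}|lborel. F z * \<theta> z) =
    (LINT z:{0<..<L}|lborel. \<theta> z) * (LINT z:{0<..<L}|lborel. F z * r z)"
proof -
  obtain \<delta>\<^sub>r \<delta>\<^sub>\<theta> where "smooth r" "\<delta>\<^sub>r > 0" and r_supp: "\<And>z. r z \<noteq> 0 \<Longrightarrow> z \<in> {\<delta>\<^sub>r..L-\<delta>\<^sub>r}"
    and "smooth \<theta>" "\<delta>\<^sub>\<theta> > 0" and \<theta>_supp: "\<And>z. \<theta> z \<noteq> 0 \<Longrightarrow> z \<in> {\<delta>\<^sub>\<theta>..L-\<delta>\<^sub>\<theta>}"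
    using r(1) \<theta> unfolding test_fun_iff by metis
  define m where "m = (LINT z:{0<..<L}|lborel. \<theta> z)"
  define k where "k z = \<theta> z - m * r z" for z
  have int: "set_integrable lborel {0<..<L} (\<lambda>z. f z * g z)"
    if "set_integrable lborel {0<..<L} f" "smooth g" for f g
    using that by (intro set_integrable_mult_continuous_on_Icc smooth_imp_continuous)
  have int1: "set_integrable lborel {0<..<L} (\<lambda>z. 1 :: real)"
    by (rule set_integrable_continuous_on_Icc) simp
  have "smooth k"
    unfolding k_def using \<open>smooth r\<close> \<open>smooth \<theta>\<close> by (intro smooth_diff smooth_cmult)
  moreover have "z \<in> {min \<delta>\<^sub>r \<delta>\<^sub>\<theta>..L - min \<delta>\<^sub>r \<delta>\<^sub>\<theta>}" if "k z \<noteq> 0" for z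
  proof -
    have "\<theta> z \<noteq> 0 \<or> r z \<noteq> 0"
      using that by (auto simp: k_def)
    then show ?thesis
      using r_supp[of z] \<theta>_supp[of z] by (auto simp: min_def)
  qed
  moreover have "(LINT z:{0<..<L}|lborel. k z) = 0"
    unfolding k_def using int[OF int1 \<open>smooth \<theta>\<close>] int[OF int1 \<open>smooth r\<close>] r(2)
    by (simp add: set_integral_diff(2) m_def)
  ultimately have "test_fun L (\<lambda>x. LBINT y=ereal 0..ereal x. k y)"
    "deriv (\<lambda>x. LBINT y=ereal 0..ereal x. k y) = k"
    using \<open>L > 0\<close> \<open>\<delta>\<^sub>r > 0\<close> \<open>\<delta>\<^sub>\<theta> > 0\<close> by (intro test_fun_antiderivative[of k "min \<delta>\<^sub>r \<delta>\<^sub>\<theta>"]; simp)+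
  then have "(LINT z:{0<..<L}|lborel. F z * k z) = 0"
    using orth by metis
  moreover have "(LINT z:{0<..<L}|lborel. F z * k z) =
      (LINT z:{0<..<L}|lborel. F z * \<theta> z) - m * (LINT z:{0<..<L}|lborel. F z * r z)"
    unfolding k_def using int[OF F \<open>smooth \<theta>\<close>] int[OF F \<open>smooth r\<close>]
    by (simp add: right_diff_distrib set_integral_diff(2) mult.left_commute)
  ultimately show ?thesis
    by (simp add: m_def)
qed

lemma AE_eq_0_if_test_orthogonal:
  fixes G :: "real \<Rightarrow> real"
  assumes G: "set_integrable lborel {0<..<L} G"
    and orth: "\<And>\<theta>. test_fun L \<theta> \<Longrightarrow> (LINT z:{0<..<L}|lborel. G z * \<theta> z) = 0"
  shows "AE x in lborel. x \<in> {0<..<L} \<longrightarrow> G x = 0"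
proof (rule AE_eq_0_if_interval_integrals_eq_0[OF G])
  fix s t assume st: "0 \<le> s" "s < t" "t \<le> L"
  have "\<forall>\<^sub>F n in sequentially. 3 \<le> real n * (t - s)"
    using st by (intro eventually_le_real_mult) auto
  then have ev: "\<forall>\<^sub>F n in sequentially. (LINT z:{0<..<L}|lborel. G z * plateau (real n) s t z) = 0"
  proof eventually_elim
    case (elim n)
    then have "real n > 0"
      using st by (cases n) auto
    with elim st show ?case
      by (intro orth test_fun_plateau) auto
  qed
  have "(\<lambda>n. LINT z:{0<..<L}|lborel. G z * plateau (real n) s t z)
      \<longlonglongrightarrow> (LINT z:{0<..<L}|lborel. G z * indicator {s<..<t} z)"
    by (intro set_integral_mult_tendsto[OF G smooth_imp_borel_measurable[OF smooth_plateau]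
        abs_plateau_le_1 plateau_tendsto_indicator[OF st(2)]])
  from LIMSEQ_unique[OF this tendsto_eventually[OF ev]] st show "(LINT z:{s<..<t}|lborel. G z) = 0"
    by (simp add: set_integral_mult_indicator_subset subset_eq)
qed

theorem du_Bois_Reymond:
  fixes F :: "real \<Rightarrow> real"
  assumes "L > 0" and F: "set_integrable lborel {0<..<L} F"
    and orth: "\<And>\<psi>. test_fun L \<psi> \<Longrightarrow> (LINT z:{0<..<L}|lborel. F z * deriv \<psi> z) = 0"
  shows "\<exists>c. AE x in lborel. x \<in> {0<..<L} \<longrightarrow> F x = c"
proof -
  obtain r where r: "test_fun L r" "(LINT z:{0<..<L}|lborel. r z) = 1"
    using normalized_test_fun_exists[OF \<open>L > 0\<close>] by blast
  define c where "c = (LINT z:{0<..<L}|lborel. F z * r z)"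
  have "AE x in lborel. x \<in> {0<..<L} \<longrightarrow> F x - c = 0"
  proof (rule AE_eq_0_if_test_orthogonal)
    show "set_integrable lborel {0<..<L} (\<lambda>z. F z - c)"
      using F set_integrable_continuous_on_Icc[of 0 L "\<lambda>_. c"] by (intro set_integral_diff(1)) auto
    fix \<theta> assume \<theta>: "test_fun L \<theta>"
    then have "smooth \<theta>"
      by (simp add: test_fun_iff)
    then have "continuous_on {0..L} \<theta>"
      by (rule smooth_imp_continuous)
    then have "set_integrable lborel {0<..<L} \<theta>" "set_integrable lborel {0<..<L} (\<lambda>z. F z * \<theta> z)"
      by (rule set_integrable_continuous_on_Icc, rule set_integrable_mult_continuous_on_Icc[OF F])
    then have "(LINT z:{0<..<L}|lborel. (F z - c) * \<theta> z) =
        (LINT z:{0<..<L}|lborel. F z * \<theta> z) - c * (LINT z:{0<..<L}|lborel. \<theta> z)"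
      by (simp add: left_diff_distrib set_integral_diff(2))
    then show "(LINT z:{0<..<L}|lborel. (F z - c) * \<theta> z) = 0"
      using integral_mult_test_fun_factor[OF \<open>L > 0\<close> F orth r \<theta>] by (simp add: c_def)
  qed
  then show ?thesis
    by auto
qed

section \<open>Nonexistence of weak solutions\<close>

lemma first_zero_right:
  fixes W :: "real \<Rightarrow> real"
  assumes W: "continuous_on {m..L} W" and "m \<le> L" "W m > 0" "W L \<le> 0"
  obtains z\<^sub>0 where "m < z\<^sub>0" "z\<^sub>0 \<le> L" "W z\<^sub>0 \<le> 0" "\<And>z. m \<le> z \<Longrightarrow> z < z\<^sub>0 \<Longrightarrow> W z > 0"
proof -
  define Z where "Z = {z \<in> {m..L}. W z \<le> 0}"
  have "closed Z"
    unfolding Z_def by (intro continuous_on_closed_Collect_le W continuous_on_const) auto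
  moreover have "L \<in> Z" "bdd_below Z"
    using assms by (auto simp: Z_def less_le_not_le intro: bdd_belowI[of _ m])
  ultimately have "Inf Z \<in> Z"
    by (intro closed_contains_Inf) auto
  show thesis
  proof (rule that[of "Inf Z"])
    show "m < Inf Z" "Inf Z \<le> L" "W (Inf Z) \<le> 0"
      using \<open>Inf Z \<in> Z\<close> \<open>W m > 0\<close> by (auto simp: Z_def less_le)
    show "W z > 0" if "m \<le> z" "z < Inf Z" for z
      using that \<open>Inf Z \<in> Z\<close> cInf_lower[OF _ \<open>bdd_below Z\<close>, of z] by (force simp: Z_def)
  qed
qed

text \<open>Just left of the first zero to the right of a point where \<open>W > 0\<close>, the function is
  positive and small, hence nondecreasing; this is incompatible with its return to 0.\<close>
lemma nonpos_if_nondecreasing_near_0: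
  fixes W :: "real \<Rightarrow> real"
  assumes W: "continuous_on {0..L} W" and "W L = 0" and "\<eta> > 0"
    and mono: "\<And>x y. 0 < x \<Longrightarrow> x < y \<Longrightarrow> y < L \<Longrightarrow> (\<forall>z\<in>{x..y}. \<bar>W z\<bar> < \<eta>) \<Longrightarrow> W x \<le> W y"
    and m: "0 < m" "m < L"
  shows "W m \<le> 0"
proof (rule ccontr)
  assume "\<not> W m \<le> 0"
  with W m \<open>W L = 0\<close> have "continuous_on {m..L} W" "m \<le> L" "W m > 0" "W L \<le> 0"
    by (auto intro: continuous_on_subset)
  then obtain z\<^sub>0 where z\<^sub>0: "m < z\<^sub>0" "z\<^sub>0 \<le> L" "W z\<^sub>0 \<le> 0"
    and pos: "\<And>z. m \<le> z \<Longrightarrow> z < z\<^sub>0 \<Longrightarrow> W z > 0"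
    using first_zero_right by blast
  have "z\<^sub>0 \<in> {0..L}"
    using z\<^sub>0 m by auto
  with W \<open>\<eta> > 0\<close> obtain d where "d > 0" and d: "\<forall>z\<in>{0..L}. \<bar>z - z\<^sub>0\<bar> < d \<longrightarrow> \<bar>W z - W z\<^sub>0\<bar> < \<eta>"
    unfolding continuous_on_iff dist_real_def by blast
  define x where "x = max m (z\<^sub>0 - d/2)"
  have x: "m \<le> x" "x < z\<^sub>0" "z\<^sub>0 - x < d"
    using z\<^sub>0 \<open>d > 0\<close> by (auto simp: x_def)
  have "W x \<le> W z\<^sub>0"
  proof (rule tendsto_lowerbound)
    have "(W \<longlongrightarrow> W z\<^sub>0) (at z\<^sub>0 within {0..L})"
      using W \<open>z\<^sub>0 \<in> {0..L}\<close> unfolding continuous_on_def by blast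
    then show "(W \<longlongrightarrow> W z\<^sub>0) (at z\<^sub>0 within {x<..<z\<^sub>0})"
      by (rule tendsto_within_subset) (use x z\<^sub>0 m in auto)
    have "W x \<le> W y" if "y \<in> {x<..<z\<^sub>0}" for y
    proof (rule mono)
      show "\<forall>z\<in>{x..y}. \<bar>W z\<bar> < \<eta>"
      proof
        fix z assume "z \<in> {x..y}"
        then have "m \<le> z" "z < z\<^sub>0" "z \<in> {0..L}" "\<bar>z - z\<^sub>0\<bar> < d"
          using that x z\<^sub>0 m by auto
        then have "0 < W z" "\<bar>W z - W z\<^sub>0\<bar> < \<eta>"
          using pos d by auto
        then show "\<bar>W z\<bar> < \<eta>"
          using \<open>W z\<^sub>0 \<le> 0\<close> by arith
      qed
    qed (use that x z\<^sub>0 m in auto)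
    then show "\<forall>\<^sub>F y in at z\<^sub>0 within {x<..<z\<^sub>0}. W x \<le> W y"
      by (auto simp: eventually_at_filter)
    show "at z\<^sub>0 within {x<..<z\<^sub>0} \<noteq> bot"
      using x by (simp add: at_within_eq_bot_iff)
  qed
  with pos[of x] x z\<^sub>0 show False
    by simp
qed

lemma eq_0_if_nondecreasing_near_0:
  fixes W :: "real \<Rightarrow> real"
  assumes W: "continuous_on {0..L} W" and "W 0 = 0" "W L = 0" "\<eta> > 0"
    and mono: "\<And>x y. 0 < x \<Longrightarrow> x < y \<Longrightarrow> y < L \<Longrightarrow> (\<forall>z\<in>{x..y}. \<bar>W z\<bar> < \<eta>) \<Longrightarrow> W x \<le> W y"
    and m: "0 < m" "m < L"
  shows "W m = 0"
proof -
  have "W m \<le> 0"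
    using nonpos_if_nondecreasing_near_0[OF W \<open>W L = 0\<close> \<open>\<eta> > 0\<close> mono m] .
  moreover have "- W (L - (L - m)) \<le> 0"
  proof (rule nonpos_if_nondecreasing_near_0[of L "\<lambda>x. - W (L - x)"])
    show "continuous_on {0..L} (\<lambda>x. - W (L - x))"
      by (intro continuous_intros continuous_on_compose2[OF W]) auto
    fix x y assume xy: "0 < x" "x < y" "y < L" and small: "\<forall>z\<in>{x..y}. \<bar>- W (L - z)\<bar> < \<eta>"
    have "W (L - y) \<le> W (L - x)"
    proof (rule mono)
      show "\<forall>z\<in>{L - y..L - x}. \<bar>W z\<bar> < \<eta>"
      proof
        fix z assume "z \<in> {L - y..L - x}"
        then have "L - z \<in> {x..y}"
          by auto
        with small show "\<bar>W z\<bar> < \<eta>"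
          by fastforce
      qed
    qed (use xy in auto)
    then show "- W (L - x) \<le> - W (L - y)"
      by simp
  qed (use \<open>W 0 = 0\<close> \<open>\<eta> > 0\<close> m in auto)
  ultimately show ?thesis
    by simp
qed

lemma ereal_less_near_pole:
  fixes \<phi> :: "real \<Rightarrow> ereal"
  assumes "continuous_on UNIV \<phi>" "\<phi> 0 = \<infinity>"
  obtains \<eta> where "\<eta> > 0" "\<And>s. \<bar>s\<bar> < \<eta> \<Longrightarrow> ereal K < \<phi> s"
proof -
  have "(\<phi> \<longlongrightarrow> \<infinity>) (at 0)"
    using assms by (metis continuous_on_eq_continuous_at isCont_def open_UNIV UNIV_I)
  then have "\<forall>\<^sub>F s in at 0. ereal K < \<phi> s"
    by (rule order_tendstoD) simp
  then obtain \<eta> where "\<eta> > 0" and \<eta>: "\<And>s. s \<noteq> 0 \<Longrightarrow> \<bar>s\<bar> < \<eta> \<Longrightarrow> ereal K < \<phi> s"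
    unfolding eventually_at dist_real_def by auto
  show thesis
  proof (rule that[OF \<open>\<eta> > 0\<close>])
    fix s :: real assume "\<bar>s\<bar> < \<eta>"
    with \<eta> assms(2) show "ereal K < \<phi> s"
      by (cases "s = 0") auto
  qed
qed

lemma weak_solution_flux_constant:
  assumes "L > 0" and a: "H_a L a" and "L2_on L g" and ws: "weak_solution L a g \<phi> u"
  obtains v c where "set_integrable lborel {0<..<L} v" "weak_deriv_on L u v"
    "AE x in lborel. x \<in> {0<..<L} \<longrightarrow> a x * v x = real_of_ereal (\<phi> (u x)) + g x + c"
proof -
  define p where "p x = real_of_ereal (\<phi> (u x))" for x
  obtain v where "L2_on L v" "weak_deriv_on L u v" and eq: "\<And>\<psi>. test_fun L \<psi> \<Longrightarrow>
      (LINT x:{0<..<L}|lborel. a x * v x * deriv \<psi> x) =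
      (LINT x:{0<..<L}|lborel. p x * deriv \<psi> x) + (LINT x:{0<..<L}|lborel. g x * deriv \<psi> x)"
    using ws unfolding weak_solution_def p_def by blast
  obtain \<alpha> \<beta> where "0 < \<alpha>" "AE x in lborel. x \<in> {0<..<L} \<longrightarrow> \<alpha> \<le> a x \<and> a x \<le> \<beta>"
    using a unfolding H_a_def by blast
  then have "AE x in lborel. x \<in> {0<..<L} \<longrightarrow> \<bar>a x\<bar> \<le> \<beta>"
    by (auto elim!: eventually_mono)
  then have av: "set_integrable lborel {0<..<L} (\<lambda>x. a x * v x)"
    using a \<open>L2_on L v\<close> by (intro set_integrable_mult_bounded set_integrable_if_L2_on) (auto simp: H_a_def)
  have "L2_on L p"
    using ws by (simp add: weak_solution_def phi_comp_L2_def p_def[abs_def])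
  then have p: "set_integrable lborel {0<..<L} p"
    by (rule set_integrable_if_L2_on)
  have g: "set_integrable lborel {0<..<L} g"
    using \<open>L2_on L g\<close> by (rule set_integrable_if_L2_on)
  define F where "F x = a x * v x - p x - g x" for x
  have F: "set_integrable lborel {0<..<L} F"
    unfolding F_def using av p g by (intro set_integral_diff(1))
  have "(LINT z:{0<..<L}|lborel. F z * deriv \<psi> z) = 0" if "test_fun L \<psi>" for \<psi>
  proof -
    have "continuous_on {0..L} (deriv \<psi>)"
      using that by (intro smooth_imp_continuous smooth_deriv) (simp add: test_fun_iff)
    then have "set_integrable lborel {0<..<L} (\<lambda>z. f z * deriv \<psi> z)"
      if "set_integrable lborel {0<..<L} f" for f
      using that by (intro set_integrable_mult_continuous_on_Icc)
    with av p g eq[OF that] show ?thesis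
      unfolding F_def by (simp add: left_diff_distrib set_integral_diff)
  qed
  then obtain c where "AE x in lborel. x \<in> {0<..<L} \<longrightarrow> F x = c"
    using du_Bois_Reymond[OF \<open>L > 0\<close> F] by blast
  then have "AE x in lborel. x \<in> {0<..<L} \<longrightarrow> a x * v x = p x + g x + c"
    by eventually_elim (auto simp: F_def)
  with \<open>L2_on L v\<close> \<open>weak_deriv_on L u v\<close> show thesis
    unfolding p_def by (intro that set_integrable_if_L2_on)
qed

lemma weak_deriv_nonneg_near_pole:
  fixes \<phi> :: "real \<Rightarrow> ereal"
  assumes flux: "AE x in lborel. x \<in> {0<..<L} \<longrightarrow> a x * v x = real_of_ereal (\<phi> (u x)) + g x + c"
    and a_pos: "AE x in lborel. x \<in> {0<..<L} \<longrightarrow> 0 < a x"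
    and g_lower: "AE x in lborel. x \<in> {0<..<L} \<longrightarrow> g x \<ge> - M"
    and finite: "AE x in lborel. x \<in> {0<..<L} \<longrightarrow> \<phi> (u x) \<noteq> \<infinity>"
    and large: "\<And>s. \<bar>s\<bar> < \<eta> \<Longrightarrow> ereal (M - c) \<le> \<phi> s"
  shows "AE x in lborel. x \<in> {0<..<L} \<longrightarrow> \<bar>u x\<bar> < \<eta> \<longrightarrow> 0 \<le> v x"
  using flux a_pos g_lower finite
proof eventually_elim
  case (elim x)
  show ?case
  proof (intro impI)
    assume "x \<in> {0<..<L}" "\<bar>u x\<bar> < \<eta>"
    then have "M - c \<le> real_of_ereal (\<phi> (u x))"
      using large[of "u x"] elim by (cases "\<phi> (u x)") auto
    moreover have "a x * v x = real_of_ereal (\<phi> (u x)) + g x + c" "- M \<le> g x" "0 < a x"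
      using elim \<open>x \<in> {0<..<L}\<close> by auto
    ultimately have "0 \<le> a x * v x" "0 < a x"
      by linarith+
    then show "0 \<le> v x"
      by (simp add: zero_le_mult_iff)
  qed
qed

lemma nondecreasing_where_weak_deriv_nonneg:
  fixes u v W :: "real \<Rightarrow> real"
  assumes u: "set_integrable lborel {0<..<L} u" and v: "set_integrable lborel {0<..<L} v"
    and uv: "weak_deriv_on L u v"
    and W: "continuous_on {0..L} W" and uW: "AE x in lborel. x \<in> {0<..<L} \<longrightarrow> u x = W x"
    and v_nonneg: "AE x in lborel. x \<in> {0<..<L} \<longrightarrow> \<bar>u x\<bar> < \<eta> \<longrightarrow> 0 \<le> v x"
    and xy: "0 < x" "x < y" "y < L" and small: "\<forall>z\<in>{x..y}. \<bar>W z\<bar> < \<eta>"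
  shows "W x \<le> W y"
proof -
  have "W y - W x = (LINT z:{x<..<y}|lborel. v z)"
    by (rule weak_deriv_on_integral[OF u v uv W uW xy])
  also have "\<dots> \<ge> 0"
    unfolding set_lebesgue_integral_def
    using uW v_nonneg by (intro integral_nonneg_AE, eventually_elim)
      (use xy small in \<open>auto simp: indicator_def\<close>)
  finally show ?thesis
    by simp
qed

lemma not_AE_notin_greaterThanLessThan:
  fixes a b :: real
  assumes "a < b"
  shows "\<not> (AE x in lborel. x \<notin> {a<..<b})"
proof
  assume "AE x in lborel. x \<notin> {a<..<b}"
  moreover have "{a<..<b} \<in> sets lborel"
    by simp
  ultimately have "{a<..<b} \<in> null_sets lborel"
    using AE_iff_null_sets by blast
  with assms show False
    by (simp add: null_sets_def)
qed

theorem theorem4p1: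
  fixes L M :: real and a g u :: "real \<Rightarrow> real" and \<phi> :: "real \<Rightarrow> ereal"
  assumes "L > 0"
    and "H_a L a"
    and "L2_on L g"
    and "H_phi \<phi>"
    and "\<phi> 0 = \<infinity>"
    and "M > 0"
    and "AE x in lborel. x \<in> {0<..<L} \<longrightarrow> g x \<ge> - M"
  shows "\<not> weak_solution L a g \<phi> u"
proof
  assume ws: "weak_solution L a g \<phi> u"
  obtain w where w: "continuous_on {0..L} w" "w 0 = 0" "w L = 0"
    and uw: "AE x in lborel. x \<in> {0<..<L} \<longrightarrow> u x = w x"
    using ws unfolding weak_solution_def H1_0_on_def by blast
  have u: "set_integrable lborel {0<..<L} u"
    using ws by (simp add: weak_solution_def H1_0_on_def H1_on_def set_integrable_if_L2_on)
  have finite: "AE x in lborel. x \<in> {0<..<L} \<longrightarrow> \<phi> (u x) \<noteq> \<infinity>"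
    using ws by (simp add: weak_solution_def phi_comp_L2_def)
  obtain v c where v: "set_integrable lborel {0<..<L} v" "weak_deriv_on L u v"
    and flux: "AE x in lborel. x \<in> {0<..<L} \<longrightarrow> a x * v x = real_of_ereal (\<phi> (u x)) + g x + c"
    using weak_solution_flux_constant[OF \<open>L > 0\<close> \<open>H_a L a\<close> \<open>L2_on L g\<close> ws] by blast
  have a_pos: "AE x in lborel. x \<in> {0<..<L} \<longrightarrow> 0 < a x"
    using \<open>H_a L a\<close> unfolding H_a_def by (auto elim!: eventually_mono)
  obtain \<eta> where "\<eta> > 0" and large: "\<And>s. \<bar>s\<bar> < \<eta> \<Longrightarrow> ereal (M - c) < \<phi> s"
    using ereal_less_near_pole \<open>H_phi \<phi>\<close> \<open>\<phi> 0 = \<infinity>\<close> unfolding H_phi_def by metis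
  have "AE x in lborel. x \<in> {0<..<L} \<longrightarrow> \<bar>u x\<bar> < \<eta> \<longrightarrow> 0 \<le> v x"
    using large
    by (intro weak_deriv_nonneg_near_pole[where \<phi> = \<phi> and u = u and g = g, OF flux a_pos assms(7) finite]
        less_imp_le)
  then have "w x \<le> w y" if "0 < x" "x < y" "y < L" "\<forall>z\<in>{x..y}. \<bar>w z\<bar> < \<eta>" for x y
    using nondecreasing_where_weak_deriv_nonneg[OF u v w(1) uw _ that] by blast
  then have w_0: "w x = 0" if "0 < x" "x < L" for x
    using eq_0_if_nondecreasing_near_0[OF w \<open>\<eta> > 0\<close> _ that] by blast
  have "AE x in lborel. x \<notin> {0<..<L}"
    using uw finite by eventually_elim (use w_0 \<open>\<phi> 0 = \<infinity>\<close> in auto)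
  with not_AE_notin_greaterThanLessThan \<open>L > 0\<close> show False
    by blast
qed

end
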